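(* Let $n\ge0$ and $k\ge1$ be integers, $\rho\ne0$ real, $0\le q<1$, and $z$ a complex number. Then $$\widehat c_{n,\rho,q}^{(k)}(z)=(-1)^n\sum_{m=0}^n S_1(n,m)\rho^{n-m}\sum_{i=0}^m\binom{m}{i}\frac{(-z)^i}{[m-i+1]_q^k}=(-1)^n\sum_{m=0}^n S_1\!\left(n,m,-\frac{z}{\rho}\right)\frac{\rho^{n-m}}{[m+1]_q^k}.$$
   Context: For real $0\le q<1$ (with $0^0=1$), $[x]_q=\frac{1-q^x}{1-q}$. Jackson's $q$-integral: $\int_0^1 f(x)\,d_qx=(1-q)\sum_{j\ge0} f(q^j)q^j$; multiple integrals are iterated. $(x)_n=x(x-1)\cdots(x-n+1)$, $(x)_0=1$. The $q$-poly-Cauchy polynomials of the second kind with parameter $\rho$ are $$\widehat c_{n,\rho,q}^{(k)}(z)=\rho^n\underbrace{\int_0^1\cdots\int_0^1}_{k}\left(\frac{-x_1\cdots x_k+z}{\rho}\right)_n d_qx_1\cdots d_qx_k.$$ The unsigned Stirling numbers of the first kind are defined by $x(x+1)\cdots(x+n-1)=\sum_{m=0}^n S_1(n,m)x^m$. The weighted Stirling numbers of the first kind $S_1(n,m,x)$ are defined by $\frac{(1-t)^{-x}(-\ln(1-t))^m}{m!}=\sum_{n\ge0} S_1(n,m,x)\frac{t^n}{n!}$. *)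

theory Defs
  imports "HOL-Analysis.Analysis" "HOL-Combinatorics.Stirling"
          "HOL-Computational_Algebra.Formal_Power_Series"
begin

definition qnum :: "real \<Rightarrow> nat \<Rightarrow> real" where
  "qnum q x = (1 - q ^ x) / (1 - q)"

definition jackson_int :: "real \<Rightarrow> (real \<Rightarrow> complex) \<Rightarrow> complex" where
  "jackson_int q f = of_real (1 - q) * (\<Sum>j. f (q ^ j) * of_real (q ^ j))"

text \<open>k-fold iterated Jackson integral of a function of k variables (given as a list).
  The first list element is the outermost integration variable.\<close>
fun multi_jackson_int :: "real \<Rightarrow> nat \<Rightarrow> (real list \<Rightarrow> complex) \<Rightarrow> complex" where
  "multi_jackson_int q 0 G = G []"
| "multi_jackson_int q (Suc k) G = jackson_int q (\<lambda>x. multi_jackson_int q k (\<lambda>xs. G (x # xs)))"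

definition falling :: "complex \<Rightarrow> nat \<Rightarrow> complex" where
  "falling x n = (\<Prod>i<n. x - of_nat i)"

definition qpolycauchy2 :: "nat \<Rightarrow> real \<Rightarrow> real \<Rightarrow> nat \<Rightarrow> complex \<Rightarrow> complex" where
  "qpolycauchy2 n \<rho> q k z = of_real \<rho> ^ n *
     multi_jackson_int q k (\<lambda>xs. falling ((- of_real (prod_list xs) + z) / of_real \<rho>) n)"

text \<open>Weighted Stirling numbers of the first kind, via the generating function
  (1-t)^(-x) (-ln(1-t))^m / m! = sum_n S1(n,m,x) t^n/n!.\<close>
definition weighted_stirling1 :: "nat \<Rightarrow> nat \<Rightarrow> complex \<Rightarrow> complex" where
  "weighted_stirling1 n m x = fact n * fps_nth
     ((fps_binomial (- x) oo (- fps_X)) * (- (fps_ln 1 oo (- fps_X))) ^ m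
       * fps_const (1 / fact m)) n"

end

theory Submission
  imports Defs
begin

text \<open>
  The k-fold Jackson integral of \<open>(x1 \<cdots> xk)^e\<close> is a product of k geometric series and equals
  \<open>1 / [e + 1]_q^k\<close>, so both formulas follow by integrating an expansion of
  \<open>\<rho>^n ((z - X)/\<rho>)_n = (-1)^n \<rho>^n pochhammer ((X - z)/\<rho>) n\<close> in powers of \<open>X\<close>.
  The first expansion uses the unsigned Stirling numbers and the binomial theorem for \<open>(X - z)^m\<close>.
  The second uses \<open>\<Sum>m. S1(n,m,x) u^m = pochhammer (x + u) n\<close>, which comes from the recurrence
  \<open>S1(n+1,m,x) = (x + n) S1(n,m,x) + S1(n,m-1,x)\<close>; that recurrence is read off from the
  differential equations \<open>(1 - t) F' = x F\<close> and \<open>(1 - t) L' = 1\<close> of \<open>F = (1 - t)^(-x)\<close> and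
  \<open>L = - ln (1 - t)\<close>.
\<close>

lemma jackson_int_polynomial:
  assumes q: "0 \<le> q" "q < 1"
  shows "jackson_int q (\<lambda>x. \<Sum>t\<in>T. c t * of_real x ^ e t)
       = (\<Sum>t\<in>T. c t / of_real (qnum q (e t + 1)))"
proof -
  define r where "r t = complex_of_real (q ^ Suc (e t))" for t
  have "norm (r t) < 1" for t
    unfolding r_def norm_of_real using q by (simp add: power_less_one_iff del: power_Suc)
  then have "(\<lambda>j. c t * r t ^ j) sums (c t / (1 - r t))" for t
    using sums_mult[OF geometric_sums, of "r t" "c t"] by (simp add: divide_inverse)
  moreover have "(\<Sum>t\<in>T. c t * complex_of_real (q ^ j) ^ e t) * complex_of_real (q ^ j)
      = (\<Sum>t\<in>T. c t * r t ^ j)" for j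
    unfolding sum_distrib_right r_def
    by (intro sum.cong refl) (simp add: power_mult[symmetric] power_mult_distrib mult_ac)
  ultimately have "(\<lambda>j. (\<Sum>t\<in>T. c t * complex_of_real (q ^ j) ^ e t) * complex_of_real (q ^ j))
      sums (\<Sum>t\<in>T. c t / (1 - r t))"
    using sums_sum[of T "\<lambda>t j. c t * r t ^ j"] by simp
  moreover have "complex_of_real (1 - q) * (c t / (1 - r t)) = c t / complex_of_real (qnum q (e t + 1))" for t
    using q by (simp add: qnum_def r_def field_simps)
  ultimately show ?thesis
    by (simp add: jackson_int_def sums_iff sum_distrib_left)
qed

lemma multi_jackson_int_polynomial:
  assumes "0 \<le> q" "q < 1"
  shows "multi_jackson_int q k (\<lambda>xs. \<Sum>t\<in>T. c t * of_real (prod_list xs) ^ e t)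
       = (\<Sum>t\<in>T. c t / of_real (qnum q (e t + 1)) ^ k)"
proof (induction k arbitrary: c)
  case 0
  then show ?case by simp
next
  case (Suc k)
  have "multi_jackson_int q k (\<lambda>xs. \<Sum>t\<in>T. c t * of_real (prod_list (x # xs)) ^ e t)
      = (\<Sum>t\<in>T. c t / of_real (qnum q (e t + 1)) ^ k * of_real x ^ e t)" for x
    using Suc.IH[of "\<lambda>t. c t * of_real x ^ e t"] by (simp add: power_mult_distrib mult_ac)
  then show ?case
    using jackson_int_polynomial[OF assms, of "\<lambda>t. c t / of_real (qnum q (e t + 1)) ^ k" e]
    by (simp add: field_simps)
qed

lemma falling_conv_pochhammer: "falling y n = (-1) ^ n * pochhammer (- y) n"
proof -
  have "falling y n = (\<Prod>i<n. (-1) * (- y + of_nat i))"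
    unfolding falling_def by (intro prod.cong refl) simp
  then show ?thesis
    unfolding prod.distrib prod_constant card_lessThan pochhammer_prod atLeast0LessThan .
qed

definition fps_rising :: "'a::field_char_0 \<Rightarrow> 'a fps" where
  "fps_rising x = Abs_fps (\<lambda>n. pochhammer x n / fact n)"

definition fps_neg_ln :: "'a::field_char_0 fps" where
  "fps_neg_ln = Abs_fps (\<lambda>n. if n = 0 then 0 else 1 / of_nat n)"

lemma fps_binomial_compose_neg_X: "fps_binomial (- x) oo - fps_X = fps_rising x"
  by (simp add: fps_eq_iff fps_compose_uminus' fps_rising_def gbinomial_pochhammer)

lemma fps_ln_compose_neg_X: "- (fps_ln 1 oo - fps_X) = fps_neg_ln"
proof (rule fps_ext)
  fix n
  show "fps_nth (- (fps_ln 1 oo - fps_X)) n = fps_nth (fps_neg_ln :: 'a fps) n"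
    by (cases n) (simp_all add: fps_compose_uminus' fps_neg_ln_def fps_ln_nth)
qed

lemma fps_nth_one_minus_X_mult_deriv:
  fixes f :: "'a::comm_ring_1 fps"
  shows "fps_nth ((1 - fps_X) * fps_deriv f) n = of_nat (Suc n) * fps_nth f (Suc n) - of_nat n * fps_nth f n"
  by (cases n) (simp_all add: algebra_simps)

lemma fps_rising_nth_Suc:
  "of_nat (Suc n) * fps_nth (fps_rising x) (Suc n) = (x + of_nat n) * fps_nth (fps_rising x) n"
proof -
  have "(of_nat (Suc n) :: 'a) \<noteq> 0" by (rule of_nat_neq_0)
  then show ?thesis
    unfolding fps_rising_def fps_nth_Abs_fps pochhammer_Suc fact_Suc of_nat_mult
    by (simp add: field_simps del: of_nat_Suc)
qed

lemma fps_rising_ODE: "(1 - fps_X) * fps_deriv (fps_rising x) = fps_const x * fps_rising x"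
proof (rule fps_ext)
  fix n
  show "fps_nth ((1 - fps_X) * fps_deriv (fps_rising x)) n = fps_nth (fps_const x * fps_rising x) n"
    unfolding fps_nth_one_minus_X_mult_deriv fps_rising_nth_Suc by (simp add: algebra_simps)
qed

lemma fps_neg_ln_nth_mult: "of_nat n * fps_nth fps_neg_ln n = (if n = 0 then 0 else 1)"
  by (simp add: fps_neg_ln_def)

lemma fps_neg_ln_ODE: "(1 - fps_X) * fps_deriv fps_neg_ln = (1 :: 'a::field_char_0 fps)"
proof (rule fps_ext)
  fix n
  show "fps_nth ((1 - fps_X) * fps_deriv fps_neg_ln) n = fps_nth (1 :: 'a fps) n"
    unfolding fps_nth_one_minus_X_mult_deriv fps_neg_ln_nth_mult by simp
qed

lemma fps_nth_Suc_if_ODE: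
  fixes F G :: "'a::comm_ring_1 fps"
  assumes "(1 - fps_X) * fps_deriv F = fps_const x * F + G"
  shows "of_nat (Suc n) * fps_nth F (Suc n) = (x + of_nat n) * fps_nth F n + fps_nth G n"
  using arg_cong[OF assms, of "\<lambda>H. fps_nth H n"]
  unfolding fps_nth_one_minus_X_mult_deriv by (simp add: algebra_simps)

lemma fps_rising_mult_neg_ln_power_ODE:
  "(1 - fps_X) * fps_deriv (fps_rising x * fps_neg_ln ^ Suc m) =
     fps_const x * (fps_rising x * fps_neg_ln ^ Suc m) +
     fps_const (of_nat (Suc m)) * (fps_rising x * fps_neg_ln ^ m)"
proof -
  have power: "fps_deriv (fps_neg_ln ^ Suc m) =
      fps_const (of_nat (Suc m)) * fps_deriv fps_neg_ln * fps_neg_ln ^ m"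
    by (subst fps_deriv_power) simp
  have "(1 - fps_X) * fps_deriv (fps_rising x * fps_neg_ln ^ Suc m) =
      ((1 - fps_X) * fps_deriv (fps_rising x)) * fps_neg_ln ^ Suc m +
      fps_const (of_nat (Suc m)) * fps_rising x * ((1 - fps_X) * fps_deriv fps_neg_ln) * fps_neg_ln ^ m"
    unfolding fps_deriv_mult power by (simp only: algebra_simps)
  also have "\<dots> = fps_const x * (fps_rising x * fps_neg_ln ^ Suc m) +
      fps_const (of_nat (Suc m)) * (fps_rising x * fps_neg_ln ^ m)"
    unfolding fps_rising_ODE fps_neg_ln_ODE by (simp add: algebra_simps)
  finally show ?thesis .
qed

lemma weighted_stirling1_conv_fps:
  "weighted_stirling1 n m x = fact n / fact m * fps_nth (fps_rising x * fps_neg_ln ^ m) n"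
  unfolding weighted_stirling1_def fps_binomial_compose_neg_X fps_ln_compose_neg_X
  by (simp add: fps_mult_right_const_nth)

lemma weighted_stirling1_0_left: "weighted_stirling1 0 m x = (if m = 0 then 1 else 0)"
  by (simp add: weighted_stirling1_conv_fps fps_rising_def fps_neg_ln_def fps_nth_power_0)

lemma weighted_stirling1_Suc_0:
  "weighted_stirling1 (Suc n) 0 x = (x + of_nat n) * weighted_stirling1 n 0 x"
proof -
  have "weighted_stirling1 (Suc n) 0 x = fact n * (of_nat (Suc n) * fps_nth (fps_rising x) (Suc n))"
    by (simp add: weighted_stirling1_conv_fps fact_Suc)
  also have "\<dots> = (x + of_nat n) * weighted_stirling1 n 0 x"
    unfolding fps_rising_nth_Suc by (simp add: weighted_stirling1_conv_fps)
  finally show ?thesis .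
qed

lemma weighted_stirling1_Suc_Suc:
  "weighted_stirling1 (Suc n) (Suc m) x =
     (x + of_nat n) * weighted_stirling1 n (Suc m) x + weighted_stirling1 n m x"
proof -
  define P where "P j = fps_rising x * fps_neg_ln ^ j" for j
  have rec: "of_nat (Suc n) * fps_nth (P (Suc m)) (Suc n) =
      (x + of_nat n) * fps_nth (P (Suc m)) n + of_nat (Suc m) * fps_nth (P m) n"
    using fps_nth_Suc_if_ODE[OF fps_rising_mult_neg_ln_power_ODE[of x m]] by (simp add: P_def)
  have "(of_nat (Suc m) :: complex) \<noteq> 0" by (rule of_nat_neq_0)
  then show ?thesis
    unfolding weighted_stirling1_conv_fps P_def[symmetric] fact_Suc[of n] fact_Suc[of m] of_nat_mult
    using rec by (simp add: field_simps del: of_nat_Suc)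
qed

lemma weighted_stirling1_eq_0: "n < m \<Longrightarrow> weighted_stirling1 n m x = 0"
proof (induction n arbitrary: m)
  case 0
  then show ?case by (simp add: weighted_stirling1_0_left)
next
  case (Suc n)
  then obtain m' where "m = Suc m'" "n < m'" by (cases m) auto
  then show ?case using Suc.IH by (simp add: weighted_stirling1_Suc_Suc)
qed

lemma weighted_stirling1_pochhammer:
  "(\<Sum>m\<le>n. weighted_stirling1 n m x * u ^ m) = pochhammer (x + u) n"
proof (induction n)
  case 0
  then show ?case by (simp add: weighted_stirling1_0_left)
next
  case (Suc n)
  have "(\<Sum>m\<le>Suc n. weighted_stirling1 n m x * u ^ m) = (\<Sum>m\<le>n. weighted_stirling1 n m x * u ^ m)"
    by (simp add: weighted_stirling1_eq_0)
  then have shift: "weighted_stirling1 n 0 x + (\<Sum>m\<le>n. weighted_stirling1 n (Suc m) x * u ^ Suc m)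
      = pochhammer (x + u) n"
    using Suc.IH by (simp only: sum.atMost_Suc_shift power_0 mult_1_right)
  have "(\<Sum>m\<le>Suc n. weighted_stirling1 (Suc n) m x * u ^ m) =
      weighted_stirling1 (Suc n) 0 x + (\<Sum>m\<le>n. weighted_stirling1 (Suc n) (Suc m) x * u ^ Suc m)"
    by (simp only: sum.atMost_Suc_shift power_0 mult_1_right)
  also have "\<dots> = (x + of_nat n) * (weighted_stirling1 n 0 x +
        (\<Sum>m\<le>n. weighted_stirling1 n (Suc m) x * u ^ Suc m)) +
      u * (\<Sum>m\<le>n. weighted_stirling1 n m x * u ^ m)"
    by (simp add: weighted_stirling1_Suc_0 weighted_stirling1_Suc_Suc algebra_simps
        sum.distrib sum_distrib_left)
  also have "\<dots> = pochhammer (x + u) (Suc n)"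
    unfolding shift Suc.IH by (simp add: pochhammer_Suc algebra_simps)
  finally show ?case .
qed

lemma qpolycauchy2_polynomial:
  assumes "0 \<le> q" "q < 1" "\<rho> \<noteq> 0"
    and expansion: "\<And>X. of_real \<rho> ^ n * falling ((- X + z) / of_real \<rho>) n = (\<Sum>t\<in>T. c t * X ^ e t)"
  shows "qpolycauchy2 n \<rho> q k z = (\<Sum>t\<in>T. c t / of_real (qnum q (e t + 1)) ^ k)"
proof -
  define R where "R = complex_of_real \<rho>"
  have "R \<noteq> 0" using assms(3) by (simp add: R_def)
  have pointwise: "falling ((- X + z) / R) n = (\<Sum>t\<in>T. c t / R ^ n * X ^ e t)" for X
  proof -
    have "falling ((- X + z) / R) n = R ^ n * falling ((- X + z) / R) n / R ^ n"
      using \<open>R \<noteq> 0\<close> by simp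
    also have "\<dots> = (\<Sum>t\<in>T. c t / R ^ n * X ^ e t)"
      unfolding expansion[folded R_def] by (simp add: sum_divide_distrib)
    finally show ?thesis .
  qed
  have "qpolycauchy2 n \<rho> q k z =
      R ^ n * multi_jackson_int q k (\<lambda>xs. \<Sum>t\<in>T. c t / R ^ n * of_real (prod_list xs) ^ e t)"
    unfolding qpolycauchy2_def R_def[symmetric] pointwise ..
  also have "\<dots> = R ^ n * (\<Sum>t\<in>T. c t / R ^ n / of_real (qnum q (e t + 1)) ^ k)"
    unfolding multi_jackson_int_polynomial[OF assms(1,2)] ..
  also have "\<dots> = (\<Sum>t\<in>T. c t / of_real (qnum q (e t + 1)) ^ k)"
    using \<open>R \<noteq> 0\<close> by (simp add: sum_distrib_left)
  finally show ?thesis .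
qed

lemma power_mult_divide_power:
  fixes R X :: "'a::field"
  assumes "R \<noteq> 0" "m \<le> n"
  shows "R ^ n * (X / R) ^ m = R ^ (n - m) * X ^ m"
  using assms by (simp add: power_diff power_divide)

lemma falling_stirling_expansion:
  fixes R X z :: complex
  assumes "R \<noteq> 0"
  shows "R ^ n * falling ((- X + z) / R) n =
    (\<Sum>m\<le>n. \<Sum>i\<le>m. (-1) ^ n * of_nat (stirling n m) * R ^ (n - m) * of_nat (m choose i) * (- z) ^ i
      * X ^ (m - i))"
proof -
  have arg: "- ((- X + z) / R) = (- z + X) / R"
    by (simp add: diff_divide_distrib add_divide_distrib)
  have "R ^ n * falling ((- X + z) / R) n =
      (-1) ^ n * (\<Sum>m\<le>n. of_nat (stirling n m) * (R ^ n * ((- z + X) / R) ^ m))"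
    unfolding falling_conv_pochhammer arg stirling_pochhammer[symmetric] by (simp add: sum_distrib_left mult_ac)
  also have "\<dots> = (-1) ^ n * (\<Sum>m\<le>n. of_nat (stirling n m) * R ^ (n - m) * (- z + X) ^ m)"
    using assms by (intro arg_cong[where f = "(*) _"] sum.cong refl) (simp add: power_mult_divide_power)
  also have "\<dots> = (\<Sum>m\<le>n. \<Sum>i\<le>m. (-1) ^ n * of_nat (stirling n m) * R ^ (n - m)
      * of_nat (m choose i) * (- z) ^ i * X ^ (m - i))"
    unfolding binomial_ring by (simp add: sum_distrib_left mult_ac)
  finally show ?thesis .
qed

lemma falling_weighted_stirling1_expansion:
  fixes R X z :: complex
  assumes "R \<noteq> 0"
  shows "R ^ n * falling ((- X + z) / R) n =
    (\<Sum>m\<le>n. (-1) ^ n * weighted_stirling1 n m (- z / R) * R ^ (n - m) * X ^ m)"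
proof -
  have arg: "- ((- X + z) / R) = - z / R + X / R"
    by (simp add: diff_divide_distrib add_divide_distrib)
  have "R ^ n * falling ((- X + z) / R) n =
      (-1) ^ n * (\<Sum>m\<le>n. weighted_stirling1 n m (- z / R) * (R ^ n * (X / R) ^ m))"
    unfolding falling_conv_pochhammer arg weighted_stirling1_pochhammer[symmetric]
    by (simp add: sum_distrib_left mult_ac)
  also have "\<dots> = (\<Sum>m\<le>n. (-1) ^ n * weighted_stirling1 n m (- z / R) * R ^ (n - m) * X ^ m)"
    using assms by (simp add: power_mult_divide_power sum_distrib_left mult_ac)
  finally show ?thesis .
qed

theorem theorem4:
  fixes n k :: nat and \<rho> q :: real and z :: complex
  assumes "k \<ge> 1" and "\<rho> \<noteq> 0" and "0 \<le> q" and "q < 1"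
  shows "qpolycauchy2 n \<rho> q k z =
           (-1) ^ n * (\<Sum>m\<le>n. of_nat (stirling n m) * of_real \<rho> ^ (n - m) *
              (\<Sum>i\<le>m. of_nat (m choose i) * (- z) ^ i / of_real (qnum q (m - i + 1) ^ k)))
       \<and> qpolycauchy2 n \<rho> q k z =
           (-1) ^ n * (\<Sum>m\<le>n. weighted_stirling1 n m (- z / of_real \<rho>) *
              of_real \<rho> ^ (n - m) / of_real (qnum q (m + 1) ^ k))"
proof
  note integrate = qpolycauchy2_polynomial[OF assms(3,4,2)]
  have R: "of_real \<rho> \<noteq> (0 :: complex)" using \<open>\<rho> \<noteq> 0\<close> by simp
  define c where "c = (\<lambda>(m, i). (-1) ^ n * of_nat (stirling n m) * of_real \<rho> ^ (n - m) *
    of_nat (m choose i) * (- z) ^ i :: complex)"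
  have "of_real \<rho> ^ n * falling ((- X + z) / of_real \<rho>) n =
      (\<Sum>p\<in>Sigma {..n} (\<lambda>m. {..m}). c p * X ^ (fst p - snd p))" for X
    unfolding falling_stirling_expansion[OF R] c_def by (simp add: sum.Sigma split_def)
  from integrate[OF this]
  show "qpolycauchy2 n \<rho> q k z =
           (-1) ^ n * (\<Sum>m\<le>n. of_nat (stirling n m) * of_real \<rho> ^ (n - m) *
              (\<Sum>i\<le>m. of_nat (m choose i) * (- z) ^ i / of_real (qnum q (m - i + 1) ^ k)))"
    by (simp add: c_def sum.Sigma split_def sum_distrib_left mult_ac)
  show "qpolycauchy2 n \<rho> q k z =
           (-1) ^ n * (\<Sum>m\<le>n. weighted_stirling1 n m (- z / of_real \<rho>) *
              of_real \<rho> ^ (n - m) / of_real (qnum q (m + 1) ^ k))"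
    using integrate[OF falling_weighted_stirling1_expansion[OF R]]
    by (simp add: sum_distrib_left mult_ac)
qed

end
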